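(* Suppose $0<c<1$ and let $b=\tfrac12-c$. For any $x\in\mathbb T$ there exist an integer $n\ge1$ and a point $y\in T^{-n}x$ such that $b\notin O_n^+(y)\cup O^-(y)$.
   Context: $\mathbb T=\mathbb R/\mathbb Z$, $Tx=2x\bmod1$. For $y\in\mathbb T$ and $n\ge1$, $O_n^+(y)=\{y,Ty,\dots,T^{n-1}y\}$ is the finite forward orbit and $O^-(y)=\bigcup_{k\ge1}T^{-k}y$ is the backward orbit. *)

theory Defs
  imports Complex_Main
begin

text \<open>The circle R/Z is represented by its fundamental domain [0,1);
  the canonical projection R -> R/Z is frac.\<close>

definition circle :: "real set" where
  "circle = {0..<1}"

definition doubling :: "real \<Rightarrow> real" where
  "doubling x = frac (2 * x)"

definition fwd_orbit :: "nat \<Rightarrow> real \<Rightarrow> real set" where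
  "fwd_orbit n y = {(doubling ^^ k) y | k. k < n}"

definition bwd_orbit :: "real \<Rightarrow> real set" where
  "bwd_orbit y = {z \<in> circle. \<exists>k\<ge>1. (doubling ^^ k) z = y}"

end

theory Submission
  imports Defs
begin

text \<open>Call a point of the forward orbit R = {b, Tb, T^2 b, ...} a merge point if both of
  its preimages lie in R. For any map, R is a "rho": a tail followed by a cycle, and the only merge point is the point
  where the tail enters the cycle. Hence at most one point is a merge point. If x is not one, a
  preimage y of x outside R works with n = 1. Otherwise pick a preimage v of x with v \<noteq> x and
  v \<noteq> b (possible as b \<noteq> 1/2); v is not a merge point, so it has a preimage y outside R, and
  y works with n = 2.\<close>

abbreviation orbit :: "('a \<Rightarrow> 'a) \<Rightarrow> 'a \<Rightarrow> 'a set" where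
  "orbit f b \<equiv> range (\<lambda>k. (f ^^ k) b)"

lemma funpow_periodic_tail:
  fixes f :: "'a \<Rightarrow> 'a"
  assumes "(f ^^ l) b = (f ^^ k) b" and "k < l" and "k \<le> m"
  shows "(f ^^ (l - k)) ((f ^^ m) b) = (f ^^ m) b"
proof -
  have "l - k + m = m - k + l"
    using assms(2,3) by simp
  then have "(f ^^ (l - k)) ((f ^^ m) b) = (f ^^ (m - k)) ((f ^^ l) b)"
    by (metis funpow_add comp_apply)
  also have "\<dots> = (f ^^ m) b"
    using assms(1,3) by (metis funpow_add comp_apply le_add_diff_inverse2)
  finally show ?thesis .
qed

lemma periodic_points_eq_if_same_image:
  fixes f :: "'a \<Rightarrow> 'a"
  assumes "0 < p" and "(f ^^ p) u = u" and "(f ^^ p) v = v" and "f u = f v"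
  shows "u = v"
proof -
  have "(f ^^ p) = (f ^^ (p - 1)) \<circ> f"
    using assms(1) by (metis Suc_diff_1 funpow_Suc_right)
  then show ?thesis
    using assms(2-4) by (metis comp_apply)
qed

text \<open>A collision at an earlier index i' would make (f^^i) b and (f^^j) b periodic with a
  common image, hence equal.\<close>

lemma orbit_collision_index_le:
  fixes f :: "'a \<Rightarrow> 'a"
  assumes "i < j" and "(f ^^ i) b \<noteq> (f ^^ j) b" and "(f ^^ Suc i) b = (f ^^ Suc j) b"
    and "i' < j'" and "(f ^^ Suc i') b = (f ^^ Suc j') b"
  shows "i \<le> i'"
proof (rule ccontr)
  assume "\<not> i \<le> i'"
  have periodic: "(f ^^ (j' - i')) ((f ^^ m) b) = (f ^^ m) b" if "i \<le> m" for m
    using funpow_periodic_tail[OF assms(5)[symmetric]] assms(4) \<open>\<not> i \<le> i'\<close> that by simp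
  have "(f ^^ i) b = (f ^^ j) b"
    using periodic_points_eq_if_same_image[of "j' - i'"] periodic[of i] periodic[of j]
      assms(1,3,4) by simp
  with assms(2) show False ..
qed

lemma orbit_collisionE:
  fixes f :: "'a \<Rightarrow> 'a"
  assumes "u \<noteq> v" and "f u = f v"
    and "u \<in> orbit f b" and "v \<in> orbit f b"
  obtains i j where "i < j" and "(f ^^ i) b \<noteq> (f ^^ j) b"
    and "(f ^^ Suc i) b = (f ^^ Suc j) b" and "f u = (f ^^ Suc i) b"
proof -
  obtain i j where u: "u = (f ^^ i) b" and v: "v = (f ^^ j) b"
    using assms(3,4) by blast
  with assms(1) consider "i < j" | "j < i"
    by (metis linorder_neqE_nat)
  then show thesis
    using that[of i j] that[of j i] u v assms(1,2) by cases auto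
qed

lemma orbit_merge_point_unique:
  fixes f :: "'a \<Rightarrow> 'a"
  assumes "u \<noteq> v" and "f u = f v"
    and "u \<in> orbit f b" and "v \<in> orbit f b"
  assumes "u' \<noteq> v'" and "f u' = f v'"
    and "u' \<in> orbit f b" and "v' \<in> orbit f b"
  shows "f u = f u'"
proof -
  obtain i j where ij: "i < j" "(f ^^ i) b \<noteq> (f ^^ j) b" "(f ^^ Suc i) b = (f ^^ Suc j) b"
    and fu: "f u = (f ^^ Suc i) b"
    using orbit_collisionE[OF assms(1-4)] .
  obtain i' j' where ij': "i' < j'" "(f ^^ i') b \<noteq> (f ^^ j') b" "(f ^^ Suc i') b = (f ^^ Suc j') b"
    and fu': "f u' = (f ^^ Suc i') b"
    using orbit_collisionE[OF assms(5-8)] .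
  have "i = i'"
    using orbit_collision_index_le[OF ij ij'(1,3)] orbit_collision_index_le[OF ij' ij(1,3)]
    by simp
  with fu fu' show ?thesis by simp
qed

lemma circle_half: "x \<in> circle \<Longrightarrow> x / 2 \<in> circle"
  and circle_half_plus: "x \<in> circle \<Longrightarrow> (x + 1) / 2 \<in> circle"
  unfolding circle_def by auto

lemma doubling_half: "x \<in> circle \<Longrightarrow> doubling (x / 2) = x"
  unfolding circle_def doubling_def by (simp add: frac_eq)

lemma doubling_half_plus:
  assumes "x \<in> circle"
  shows "doubling ((x + 1) / 2) = x"
proof -
  have "doubling ((x + 1) / 2) = frac (x + 1)"
    unfolding doubling_def by (simp add: add_divide_distrib)
  also have "\<dots> = x"
    using assms unfolding circle_def by (simp add: frac_1_eq frac_eq)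
  finally show ?thesis .
qed

lemma doubling_merge_point_unique:
  assumes "x \<in> circle" "x / 2 \<in> orbit doubling b" "(x + 1) / 2 \<in> orbit doubling b"
    and "x' \<in> circle" "x' / 2 \<in> orbit doubling b" "(x' + 1) / 2 \<in> orbit doubling b"
  shows "x = x'"
  using orbit_merge_point_unique[of "x / 2" "(x + 1) / 2" doubling b "x' / 2" "(x' + 1) / 2"] assms
  by (simp add: doubling_half doubling_half_plus)

lemma doubling_preimage_off_orbit:
  assumes "x \<in> circle" and "\<not> (x / 2 \<in> orbit doubling b \<and> (x + 1) / 2 \<in> orbit doubling b)"
  obtains y where "y \<in> circle" "doubling y = x" "y \<notin> orbit doubling b"
  using assms circle_half circle_half_plus doubling_half doubling_half_plus by blast

lemma doubling_preimage_avoiding: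
  assumes "x \<in> circle" and "b \<noteq> 1 / 2"
  obtains v where "v \<in> circle" "doubling v = x" "v \<noteq> x" "v \<noteq> b"
proof (cases "(x + 1) / 2 = b")
  case True
  with assms have "x \<noteq> 0" by auto
  with True show thesis
    using that[of "x / 2"] assms(1) circle_half doubling_half by fastforce
next
  case False
  have "(x + 1) / 2 \<noteq> x"
    using assms(1) unfolding circle_def by auto
  with False show thesis
    using that assms(1) circle_half_plus doubling_half_plus by blast
qed

lemma not_in_orbits_if_off_orbit:
  assumes "y \<notin> orbit doubling b" and "\<forall>k. 0 < k \<and> k < n \<longrightarrow> (doubling ^^ k) y \<noteq> b"
  shows "b \<notin> fwd_orbit n y \<union> bwd_orbit y"
  using assms unfolding fwd_orbit_def bwd_orbit_def by (auto simp: image_iff) (metis funpow_0 gr0I)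

lemma doubling_preimage_avoiding_orbits:
  assumes "x \<in> circle" and "b \<noteq> 1 / 2"
  shows "\<exists>n::nat. n \<ge> 1 \<and> (\<exists>y \<in> circle. (doubling ^^ n) y = x \<and> b \<notin> fwd_orbit n y \<union> bwd_orbit y)"
proof (cases "x / 2 \<in> orbit doubling b \<and> (x + 1) / 2 \<in> orbit doubling b")
  case False
  then obtain y where "y \<in> circle" "doubling y = x" "y \<notin> orbit doubling b"
    using doubling_preimage_off_orbit assms(1) by blast
  with not_in_orbits_if_off_orbit[of y b 1] show ?thesis
    by (intro exI[of _ 1]) auto
next
  case True
  obtain v where v: "v \<in> circle" "doubling v = x" "v \<noteq> x" "v \<noteq> b"
    using doubling_preimage_avoiding assms by blast
  then have "\<not> (v / 2 \<in> orbit doubling b \<and> (v + 1) / 2 \<in> orbit doubling b)"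
    using doubling_merge_point_unique[OF assms(1) True[THEN conjunct1] True[THEN conjunct2] v(1)]
    by auto
  then obtain y where "y \<in> circle" "doubling y = v" "y \<notin> orbit doubling b"
    using doubling_preimage_off_orbit v(1) by blast
  moreover have "\<forall>k. 0 < k \<and> k < 2 \<longrightarrow> (doubling ^^ k) y \<noteq> b"
    using \<open>doubling y = v\<close> v(4) by (auto simp: less_2_cases_iff)
  ultimately show ?thesis
    using not_in_orbits_if_off_orbit[of y b 2] v(2)
    by (intro exI[of _ 2]) (auto simp: numeral_2_eq_2)
qed

lemma frac_half_minus_ne_half:
  fixes c :: real
  assumes "0 < c" and "c < 1"
  shows "frac (1 / 2 - c) \<noteq> 1 / 2"
proof
  assume "frac (1 / 2 - c) = 1 / 2"
  then have "(1 / 2 - c) - 1 / 2 \<in> \<int>"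
    unfolding frac_unique_iff by blast
  then have "- c \<in> \<int>"
    by simp
  then obtain m :: int where "- c = of_int m"
    by (elim Ints_cases)
  with assms have "real_of_int m < 0" and "-1 < real_of_int m"
    by linarith+
  then show False
    by simp
qed

theorem lemma6p3:
  fixes c x :: real
  assumes "0 < c" and "c < 1" and "x \<in> circle"
  shows "\<exists>n::nat. n \<ge> 1 \<and> (\<exists>y \<in> circle. (doubling ^^ n) y = x \<and>
           frac (1/2 - c) \<notin> fwd_orbit n y \<union> bwd_orbit y)"
  using doubling_preimage_avoiding_orbits[OF assms(3) frac_half_minus_ne_half[OF assms(1,2)]]
  by simp

end
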